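(* Let $d\in\mathbb{N}$, $Q=[-1/2,1/2]^d$, let $z\in\mathbb{R}^d$ be a unit vector and let $s>0$. Then $$|\{y\in Q:\langle z,y\rangle\ge s\}|\le e^{-\frac78 s^2},$$ where $|\cdot|$ denotes Lebesgue measure. *)

theory Defs
  imports "HOL-Analysis.Analysis"
begin

end

theory Submission
  imports Defs "HOL-Probability.Hoeffding"
begin

text \<open>
  Chernoff bound for the uniform distribution on the cube: for \<open>\<lambda> \<ge> 0\<close>, the indicator of
  \<open>\<langle>z, y\<rangle> \<ge> s\<close> is dominated by \<open>exp (\<lambda> (\<langle>z, y\<rangle> - s))\<close>. Its integral over the cube factors into
  one-dimensional integrals, each bounded via \<open>cosh x \<le> exp (x\<^sup>2/2)\<close> after symmetrising, which
  gives \<open>exp (- \<lambda> s + \<lambda>\<^sup>2/8)\<close> for a unit vector \<open>z\<close>. Taking \<open>\<lambda> = 4 s\<close> yields the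
  bound \<open>exp (- 2 s\<^sup>2)\<close>, stronger than the one claimed.
\<close>

lemma cosh_le_exp_half_square: "cosh (x::real) \<le> exp (x\<^sup>2 / 2)"
proof -
  have "cosh x \<le> exp (x\<^sup>2 / 2)" if "x \<ge> 0" for x :: real
  proof -
    \<comment> \<open>Hoeffding's lemma for a fair coin with values \<open>0\<close> and \<open>2 x\<close>\<close>
    have "- x + ln ((1 + exp (2 * x)) / 2) \<le> x\<^sup>2 / 2"
      using Hoeffdings_lemma_aux[of "2 * x" "1/2"] that
      by (simp add: power2_eq_square field_simps)
    hence "(1 + exp (2 * x)) / 2 \<le> exp (x + x\<^sup>2 / 2)"
      by (smt (verit) exp_gt_zero exp_le_cancel_iff exp_ln)
    hence "exp (- x) * ((1 + exp (2 * x)) / 2) \<le> exp (- x) * exp (x + x\<^sup>2 / 2)"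
      by simp
    moreover have "cosh x = exp (- x) * ((1 + exp (2 * x)) / 2)"
      by (simp add: cosh_def field_simps flip: exp_add)
    ultimately show ?thesis
      by (simp flip: exp_add)
  qed
  from this[of "\<bar>x\<bar>"] show ?thesis by (cases "x \<ge> 0") auto
qed

lemma nn_integral_exp_interval_le:
  fixes c r :: real
  assumes "r \<ge> 0"
  shows "(\<integral>\<^sup>+t. indicator {-r..r} t * ennreal (exp (c * t)) \<partial>lborel)
           \<le> ennreal (2 * r * exp ((c * r)\<^sup>2 / 2))"
proof -
  define I where "I c = (\<integral>\<^sup>+t. indicator {-r..r} t * ennreal (exp (c * t)) \<partial>lborel)" for c
  have reflect: "I (- c) = I c"
  proof -
    have "I c = (\<integral>\<^sup>+t. indicator {-r..r} t * ennreal (exp (c * t)) \<partial>distr lborel borel uminus)"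
      by (simp add: I_def lborel_distr_uminus)
    also have "\<dots> = I (- c)"
      by (auto simp: I_def nn_integral_distr indicator_def intro!: nn_integral_cong)
    finally show ?thesis ..
  qed
  have pointwise: "indicator {-r..r} t * ennreal (exp (c * t)) + indicator {-r..r} t * ennreal (exp (- c * t))
      \<le> ennreal (2 * exp ((c * r)\<^sup>2 / 2)) * indicator {-r..r} t" for t
  proof (cases "t \<in> {-r..r}")
    case True
    have "(c * t)\<^sup>2 \<le> (c * r)\<^sup>2"
      using True assms by (auto simp: abs_le_square_iff[symmetric] abs_mult intro!: mult_left_mono)
    hence "cosh (c * t) \<le> exp ((c * r)\<^sup>2 / 2)"
      using cosh_le_exp_half_square[of "c * t"] by (smt (verit) divide_right_mono exp_mono)
    hence "exp (c * t) + exp (- (c * t)) \<le> 2 * exp ((c * r)\<^sup>2 / 2)"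
      by (simp add: cosh_def)
    with True show ?thesis by (simp flip: ennreal_plus)
  qed simp
  have "2 * I c = I c + I (- c)"
    by (simp add: reflect mult_2)
  also have "\<dots> = (\<integral>\<^sup>+t. indicator {-r..r} t * ennreal (exp (c * t)) + indicator {-r..r} t * ennreal (exp (- c * t)) \<partial>lborel)"
    by (simp add: I_def nn_integral_add)
  also have "\<dots> \<le> (\<integral>\<^sup>+t. ennreal (2 * exp ((c * r)\<^sup>2 / 2)) * indicator {-r..r} t \<partial>lborel)"
    by (intro nn_integral_mono pointwise)
  also have "\<dots> = ennreal (2 * exp ((c * r)\<^sup>2 / 2)) * ennreal (2 * r)"
    using assms by (simp add: nn_integral_cmult_indicator)
  also have "\<dots> = 2 * ennreal (2 * r * exp ((c * r)\<^sup>2 / 2))"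
    using assms by (simp add: mult_ac flip: ennreal_mult ennreal_numeral)
  finally show ?thesis
    unfolding I_def by (subst (asm) ennreal_mult_le_mult_iff) auto
qed

lemma indicator_cube_inner_exp:
  fixes z y :: "'a::euclidean_space" and r :: real
  shows "indicator (cbox (- (r *\<^sub>R One)) (r *\<^sub>R One)) y * ennreal (exp (z \<bullet> y))
           = (\<Prod>b\<in>Basis. indicator {-r..r} (y \<bullet> b) * ennreal (exp ((z \<bullet> b) * (y \<bullet> b))))"
proof (cases "y \<in> cbox (- (r *\<^sub>R One)) (r *\<^sub>R One)")
  case True
  hence "\<forall>b\<in>Basis. y \<bullet> b \<in> {-r..r}"
    by (simp add: mem_box)
  hence "(\<Prod>b\<in>Basis. indicator {-r..r} (y \<bullet> b) * ennreal (exp ((z \<bullet> b) * (y \<bullet> b))))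
           = ennreal (\<Prod>b\<in>Basis. exp ((z \<bullet> b) * (y \<bullet> b)))"
    by (simp add: prod_ennreal)
  also have "(\<Prod>b\<in>Basis. exp ((z \<bullet> b) * (y \<bullet> b))) = exp (z \<bullet> y)"
    by (simp add: exp_sum euclidean_inner[of z y])
  finally show ?thesis
    using True by simp
next
  case False
  then obtain b where b: "b \<in> Basis" "y \<bullet> b \<notin> {-r..r}"
    by (auto simp: mem_box)
  hence "(\<Prod>b\<in>Basis. indicator {-r..r} (y \<bullet> b) * ennreal (exp ((z \<bullet> b) * (y \<bullet> b)))) = 0"
    by (intro prod_zero bexI[of _ b]) auto
  with False show ?thesis
    by simp
qed

lemma nn_integral_exp_inner_cube_le:
  fixes z :: "'a::euclidean_space" and r :: real
  assumes "r \<ge> 0"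
  shows "(\<integral>\<^sup>+y. indicator (cbox (- (r *\<^sub>R One)) (r *\<^sub>R One)) y * ennreal (exp (z \<bullet> y)) \<partial>lborel)
           \<le> ennreal ((2 * r) ^ DIM('a) * exp ((r * norm z)\<^sup>2 / 2))"
proof -
  have "(\<integral>\<^sup>+y. indicator (cbox (- (r *\<^sub>R One)) (r *\<^sub>R One)) y * ennreal (exp (z \<bullet> y)) \<partial>lborel)
          = (\<Prod>b\<in>Basis. \<integral>\<^sup>+t. indicator {-r..r} t * ennreal (exp ((z \<bullet> b) * t)) \<partial>lborel)"
    unfolding indicator_cube_inner_exp by (rule nn_integral_lborel_prod) auto
  also have "\<dots> \<le> (\<Prod>b\<in>Basis. ennreal (2 * r * exp (((z \<bullet> b) * r)\<^sup>2 / 2)))"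
    by (intro prod_mono_ennreal nn_integral_exp_interval_le assms)
  also have "\<dots> = ennreal (\<Prod>b\<in>Basis. 2 * r * exp (((z \<bullet> b) * r)\<^sup>2 / 2))"
    using assms by (simp add: prod_ennreal)
  also have "(\<Prod>b\<in>Basis. 2 * r * exp (((z \<bullet> b) * r)\<^sup>2 / 2))
      = (2 * r) ^ DIM('a) * exp (\<Sum>b\<in>Basis. ((z \<bullet> b) * r)\<^sup>2 / 2)"
    by (simp add: prod.distrib exp_sum)
  also have "(\<Sum>b\<in>Basis. ((z \<bullet> b) * r)\<^sup>2 / 2) = (r * norm z)\<^sup>2 / 2"
  proof -
    have "(norm z)\<^sup>2 = (\<Sum>b\<in>Basis. (z \<bullet> b)\<^sup>2)"
      unfolding power2_norm_eq_inner by (simp add: euclidean_inner[of z z] power2_eq_square)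
    thus ?thesis
      by (simp add: power_mult_distrib sum_distrib_left mult.commute flip: sum_divide_distrib)
  qed
  finally show ?thesis .
qed

lemma emeasure_cube_inner_ge_le:
  fixes z :: "'a::euclidean_space" and r s :: real
  assumes "r > 0" and "z \<noteq> 0" and "s \<ge> 0"
  shows "emeasure lborel {y \<in> cbox (- (r *\<^sub>R One)) (r *\<^sub>R One). s \<le> z \<bullet> y}
           \<le> ennreal ((2 * r) ^ DIM('a) * exp (- s\<^sup>2 / (2 * (r * norm z)\<^sup>2)))"
proof -
  define Q :: "'a set" where "Q = cbox (- (r *\<^sub>R One)) (r *\<^sub>R One)"
  \<comment> \<open>the minimiser of \<open>- l s + l\<^sup>2 r\<^sup>2 \<parallel>z\<parallel>\<^sup>2 / 2\<close>\<close>
  define l where "l = s / (r * norm z)\<^sup>2"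
  have "l \<ge> 0"
    using assms by (simp add: l_def)
  have "{y \<in> Q. s \<le> z \<bullet> y} \<in> sets lborel"
  proof -
    have "{y \<in> Q. s \<le> z \<bullet> y} = Q \<inter> {y. z \<bullet> y \<ge> s}"
      by auto
    thus ?thesis
      unfolding Q_def by (simp add: closed_Int closed_halfspace_ge)
  qed
  have markov: "indicator {y \<in> Q. s \<le> z \<bullet> y} y
      \<le> ennreal (exp (- l * s)) * (indicator Q y * ennreal (exp ((l *\<^sub>R z) \<bullet> y)))" for y
  proof (cases "y \<in> Q \<and> s \<le> z \<bullet> y")
    case True
    hence "l * s \<le> l * (z \<bullet> y)"
      using \<open>l \<ge> 0\<close> by (intro mult_left_mono) auto
    hence "1 \<le> exp (- l * s) * exp ((l *\<^sub>R z) \<bullet> y)"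
      by (simp flip: exp_add)
    with True show ?thesis
      by (simp flip: ennreal_mult)
  qed auto
  have "emeasure lborel {y \<in> Q. s \<le> z \<bullet> y} = (\<integral>\<^sup>+y. indicator {y \<in> Q. s \<le> z \<bullet> y} y \<partial>lborel)"
    using \<open>{y \<in> Q. s \<le> z \<bullet> y} \<in> sets lborel\<close> by simp
  also have "\<dots> \<le> (\<integral>\<^sup>+y. ennreal (exp (- l * s)) * (indicator Q y * ennreal (exp ((l *\<^sub>R z) \<bullet> y))) \<partial>lborel)"
    by (intro nn_integral_mono markov)
  also have "\<dots> = ennreal (exp (- l * s)) * (\<integral>\<^sup>+y. indicator Q y * ennreal (exp ((l *\<^sub>R z) \<bullet> y)) \<partial>lborel)"
    by (rule nn_integral_cmult) (simp add: Q_def)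
  also have "\<dots> \<le> ennreal (exp (- l * s)) * ennreal ((2 * r) ^ DIM('a) * exp ((r * norm (l *\<^sub>R z))\<^sup>2 / 2))"
    unfolding Q_def using assms by (intro mult_left_mono nn_integral_exp_inner_cube_le) auto
  also have "\<dots> = ennreal ((2 * r) ^ DIM('a) * exp (- s\<^sup>2 / (2 * (r * norm z)\<^sup>2)))"
  proof -
    have "- l * s + (r * norm (l *\<^sub>R z))\<^sup>2 / 2 = - s\<^sup>2 / (2 * (r * norm z)\<^sup>2)"
      using assms \<open>l \<ge> 0\<close> by (simp add: l_def power2_eq_square field_simps)
    moreover have "ennreal (exp (- l * s)) * ennreal ((2 * r) ^ DIM('a) * exp ((r * norm (l *\<^sub>R z))\<^sup>2 / 2))
        = ennreal ((2 * r) ^ DIM('a) * exp (- l * s + (r * norm (l *\<^sub>R z))\<^sup>2 / 2))"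
      using assms by (subst ennreal_mult[symmetric]) (auto simp: mult_ac simp flip: exp_add)
    ultimately show ?thesis
      by simp
  qed
  finally show ?thesis
    unfolding Q_def .
qed

lemma vec_const_eq_scaleR_One: "(\<chi> i. c) = c *\<^sub>R (One :: real ^ 'n)"
  by (simp add: const_vector_cart scaleR_sum_right)

theorem mainTheorem13:
  fixes z :: "real ^ 'n" and s :: real
  assumes "norm z = 1" and "s > 0"
  shows "measure lebesgue {y \<in> cbox (\<chi> i. - 1/2) (\<chi> i. 1/2). z \<bullet> y \<ge> s}
           \<le> exp (- (7/8) * s\<^sup>2)"
proof -
  define S where "S = {y \<in> cbox (\<chi> i. - 1/2) (\<chi> i. 1/2). z \<bullet> y \<ge> s}"
  have "S = {y \<in> cbox (- ((1/2) *\<^sub>R One)) ((1/2) *\<^sub>R One). s \<le> z \<bullet> y}"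
    unfolding S_def vec_const_eq_scaleR_One by simp
  hence "emeasure lborel S \<le> ennreal (exp (- 2 * s\<^sup>2))"
    using emeasure_cube_inner_ge_le[of "1/2" z s] assms by (force simp: power2_eq_square mult_ac)
  also have "\<dots> \<le> ennreal (exp (- (7/8) * s\<^sup>2))"
    by (intro ennreal_leI) simp
  finally have "measure lborel S \<le> exp (- (7/8) * s\<^sup>2)"
    unfolding measure_def by (intro enn2real_leI) auto
  moreover have "S \<in> sets lborel"
    unfolding S_def by (simp add: closed_Int closed_halfspace_ge Collect_conj_eq)
  ultimately show ?thesis
    unfolding S_def by simp
qed

end
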